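(* For a non-negative integer $n$ and real numbers $p,x$, define \[ G_n(p,x)=\sum_{i=0}^n\binom{n}{i}\big((1-x)p+ix/n\big)^i\big(1-(1-x)p-ix/n\big)^{n-i}. \] Then for all non-negative integers $n$ and all real numbers $x$ and $p$, $G_n(p,x)=G_n(0,x)$.
   Context: Conventions: $0^0=1$; when $i=n=0$, the quantity $ix/n$ is interpreted with $0/0=1$ (so $G_0(p,x)=1$). *)

theory Defs
  imports Complex_Main
begin

text \<open>The ratio i x / n, with the paper's convention that 0/0 = 1 when i = n = 0.\<close>
definition ratio :: "nat \<Rightarrow> nat \<Rightarrow> real \<Rightarrow> real" where
  "ratio i n x = (if i = 0 \<and> n = 0 then 1 else real i * x / real n)"

definition G :: "nat \<Rightarrow> real \<Rightarrow> real \<Rightarrow> real" where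
  "G n p x = (\<Sum>i = 0..n. real (n choose i) *
      ((1 - x) * p + ratio i n x) ^ i * (1 - (1 - x) * p - ratio i n x) ^ (n - i))"

end

theory Submission
  imports Defs
begin

text \<open>For n > 0, G n p x is the Abel-type sum below with step y = x/n, total c = 1 and offset
  a = (1 - x) p. Differentiating in a and absorbing the factors i and m - i into the binomial
  coefficients turns the derivative of the m-th sum into m times the difference of the (m-1)-th
  sum at a + y and at a. By induction on m the (m-1)-th sum does not depend on the offset, so the
  derivative vanishes and the m-th sum is constant in a as well.\<close>

definition abel_sum :: "nat \<Rightarrow> real \<Rightarrow> real \<Rightarrow> real \<Rightarrow> real" where
  "abel_sum m y c a =
     (\<Sum>i=0..m. real (m choose i) * (a + real i * y) ^ i * (c - a - real i * y) ^ (m - i))"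

lemma abel_sum_has_derivative_termwise:
  "(abel_sum m y c has_real_derivative
     (\<Sum>i=0..m. real (m choose i) * (real i * (a + real i * y) ^ (i - 1) * (c - a - real i * y) ^ (m - i)))
   - (\<Sum>i=0..m. real (m choose i) * (real (m - i) * (a + real i * y) ^ i * (c - a - real i * y) ^ (m - i - 1))))
   (at a)"
  unfolding abel_sum_def sum_subtractf[symmetric] right_diff_distrib[symmetric]
  by (rule DERIV_sum, (rule derivative_eq_intros refl)+) (simp add: algebra_simps)

lemma abel_sum_deriv_increasing_part:
  "(\<Sum>i=0..Suc k. real (Suc k choose i) *
      (real i * (a + real i * y) ^ (i - 1) * (c - a - real i * y) ^ (Suc k - i)))
   = real (Suc k) * abel_sum k y c (a + y)"
proof -
  have "(\<Sum>i=0..Suc k. real (Suc k choose i) *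
          (real i * (a + real i * y) ^ (i - 1) * (c - a - real i * y) ^ (Suc k - i)))
      = (\<Sum>j=0..k. real (Suc k choose Suc j) *
          (real (Suc j) * (a + real (Suc j) * y) ^ j * (c - a - real (Suc j) * y) ^ (k - j)))"
    by (subst sum.atLeast0_atMost_Suc_shift) (simp del: binomial_Suc_Suc of_nat_Suc)
  also have "\<dots> = (\<Sum>j=0..k. real (Suc k) *
          (real (k choose j) * (a + y + real j * y) ^ j * (c - (a + y) - real j * y) ^ (k - j)))"
  proof (rule sum.cong[OF refl])
    fix j
    have "real (Suc k choose Suc j) * real (Suc j) = real (Suc k) * real (k choose j)"
      by (metis Suc_times_binomial[of j k] of_nat_mult mult.commute)
    moreover have "a + real (Suc j) * y = a + y + real j * y"
      and "c - a - real (Suc j) * y = c - (a + y) - real j * y"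
      by (simp_all add: algebra_simps)
    ultimately show "real (Suc k choose Suc j) *
          (real (Suc j) * (a + real (Suc j) * y) ^ j * (c - a - real (Suc j) * y) ^ (k - j))
        = real (Suc k) *
          (real (k choose j) * (a + y + real j * y) ^ j * (c - (a + y) - real j * y) ^ (k - j))"
      by (simp only: mult.assoc[symmetric])
  qed
  finally show ?thesis
    by (simp add: abel_sum_def sum_distrib_left)
qed

lemma abel_sum_deriv_decreasing_part:
  "(\<Sum>i=0..Suc k. real (Suc k choose i) *
      (real (Suc k - i) * (a + real i * y) ^ i * (c - a - real i * y) ^ (Suc k - i - 1)))
   = real (Suc k) * abel_sum k y c a"
proof -
  have "(\<Sum>i=0..Suc k. real (Suc k choose i) *
          (real (Suc k - i) * (a + real i * y) ^ i * (c - a - real i * y) ^ (Suc k - i - 1)))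
      = (\<Sum>i=0..k. real (Suc k) *
          (real (k choose i) * (a + real i * y) ^ i * (c - a - real i * y) ^ (k - i)))"
  proof (subst sum.atLeast0_atMost_Suc, simp only: diff_self_eq_0 of_nat_0 mult_zero_left
        mult_zero_right add_0_right, rule sum.cong[OF refl])
    fix i
    have "real (Suc k choose i) * real (Suc k - i) = real (Suc k) * real (k choose i)"
      using binomial_absorb_comp[of "Suc k" i] by (metis diff_Suc_1 of_nat_mult mult.commute)
    moreover have "Suc k - i - 1 = k - i"
      by simp
    ultimately show "real (Suc k choose i) *
          (real (Suc k - i) * (a + real i * y) ^ i * (c - a - real i * y) ^ (Suc k - i - 1))
        = real (Suc k) * (real (k choose i) * (a + real i * y) ^ i * (c - a - real i * y) ^ (k - i))"
      by (simp only: mult.assoc[symmetric])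
  qed
  then show ?thesis
    by (simp add: abel_sum_def sum_distrib_left)
qed

lemma abel_sum_has_derivative:
  "(abel_sum (Suc k) y c has_real_derivative
     real (Suc k) * (abel_sum k y c (a + y) - abel_sum k y c a)) (at a)"
  using abel_sum_has_derivative_termwise[of "Suc k" y c a]
  unfolding abel_sum_deriv_increasing_part abel_sum_deriv_decreasing_part right_diff_distrib .

lemma abel_sum_offset_independent: "abel_sum m y c a = abel_sum m y c b"
proof (induction m arbitrary: a b)
  case 0
  show ?case
    by (simp add: abel_sum_def)
next
  case (Suc k)
  have "\<And>a. (abel_sum (Suc k) y c has_real_derivative 0) (at a)"
    using abel_sum_has_derivative[of k y c] Suc.IH by (metis diff_self mult_zero_right)
  then show ?case
    by (blast intro: DERIV_isconst_all)
qed

lemma G_eq_abel_sum: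
  assumes "n > 0"
  shows "G n p x = abel_sum n (x / real n) 1 ((1 - x) * p)"
  unfolding G_def abel_sum_def ratio_def using assms by (intro sum.cong) auto

theorem lemma2p7:
  fixes n :: nat and p x :: real
  shows "G n p x = G n 0 x"
proof (cases "n = 0")
  case True
  then show ?thesis
    by (simp add: G_def ratio_def)
next
  case False
  then show ?thesis
    using G_eq_abel_sum abel_sum_offset_independent by (metis gr0I)
qed

end
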